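(* Let $\mathcal{F}=(V,\mathcal{E}\cup\mathcal{A})$ be a mixed hypergraph on a finite vertex set $V$, let $h$ be an integer-valued intersecting supermodular function on $V$, and let $b$ be a submodular function on $V$. Then there exists an orientation $\overrightarrow{\mathcal{E}}$ of $\mathcal{E}$ such that $$e_{\overrightarrow{\mathcal{E}}\cup\mathcal{A}}(\mathcal{P})\ \ge\ \sum_{X\in\mathcal{P}}h(X)-b(\cup\mathcal{P})\quad\text{for every subpartition }\mathcal{P}\text{ of }V$$ if and only if $$e_{\mathcal{E}\cup\mathcal{A}}(\mathcal{P})\ \ge\ \sum_{X\in\mathcal{P}}h(X)-b(\cup\mathcal{P})\quad\text{for every subpartition }\mathcal{P}\text{ of }V.$$
   Context: A mixed hypergraph $\mathcal{F}=(V,\mathcal{E}\cup\mathcal{A})$ consists of a vertex set $V$, a (multi)set $\mathcal{E}$ of hyperedges, each a subset of $V$ of size at least two, and a (multi)set $\mathcal{A}$ of dyperedges, each an ordered pair $(Z,z)$ with $z\in V$ (the head) and $Z$ a non-empty subset of $V-z$ (the tails). A hyperedge $X$ enters a set $Y\subseteq V$ if $X\cap Y\neq\emptyset\neq X\setminus Y$; a dyperedge $(Z,z)$ enters $Y$ if $z\in Y$ and $Z\setminus Y\neq\emptyset$. Orienting a hyperedge $X$ means replacing it by a dyperedge $(X-x,x)$ for some $x\in X$; an orientation $\overrightarrow{\mathcal{E}}$ of $\mathcal{E}$ orients every hyperedge of $\mathcal{E}$. A subpartition of $V$ is a set of pairwise disjoint subsets of $V$; for a subpartition $\mathcal{P}$,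 $\cup\mathcal{P}$ denotes the union of its members, and $e_{\mathcal{E}\cup\mathcal{A}}(\mathcal{P})$ denotes the number of hyperedges in $\mathcal{E}$ and dyperedges in $\mathcal{A}$ that enter some member of $\mathcal{P}$ (similarly for $e_{\overrightarrow{\mathcal{E}}\cup\mathcal{A}}$, counting only dyperedges). A set function $h$ on $V$ (defined on subsets of $V$) is intersecting supermodular if $h(X)+h(Y)\le h(X\cup Y)+h(X\cap Y)$ for all $X,Y\subseteq V$ with $X\cap Y\neq\emptyset$; a set function $b$ on $V$ is submodular if $b(X)+b(Y)\ge b(X\cup Y)+b(X\cap Y)$ for all $X,Y\subseteq V$. *)

theory Defs
  imports Main "HOL-Library.Multiset"
begin

text \<open>Hyperedges are sets of vertices; dyperedges are pairs (Z, z) of tail set and head.\<close>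

definition mixed_hypergraph :: "'a set \<Rightarrow> 'a set multiset \<Rightarrow> ('a set \<times> 'a) multiset \<Rightarrow> bool" where
  "mixed_hypergraph V E A \<longleftrightarrow>
     (\<forall>X \<in># E. X \<subseteq> V \<and> card X \<ge> 2) \<and>
     (\<forall>(Z, z) \<in># A. z \<in> V \<and> Z \<subseteq> V - {z} \<and> Z \<noteq> {})"

definition hyperedge_enters :: "'a set \<Rightarrow> 'a set \<Rightarrow> bool" where
  "hyperedge_enters X Y \<longleftrightarrow> X \<inter> Y \<noteq> {} \<and> X - Y \<noteq> {}"

definition dyperedge_enters :: "'a set \<times> 'a \<Rightarrow> 'a set \<Rightarrow> bool" where
  "dyperedge_enters d Y \<longleftrightarrow> snd d \<in> Y \<and> fst d - Y \<noteq> {}"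

definition is_orientation :: "'a set multiset \<Rightarrow> ('a set \<times> 'a) multiset \<Rightarrow> bool" where
  "is_orientation E D \<longleftrightarrow>
     (\<exists>M :: ('a set \<times> 'a) multiset.
        image_mset fst M = E \<and> (\<forall>(X, x) \<in># M. x \<in> X) \<and>
        D = image_mset (\<lambda>(X, x). (X - {x}, x)) M)"

definition subpartition :: "'a set \<Rightarrow> 'a set set \<Rightarrow> bool" where
  "subpartition V P \<longleftrightarrow> (\<forall>X \<in> P. X \<subseteq> V) \<and>
     (\<forall>X \<in> P. \<forall>Y \<in> P. X \<noteq> Y \<longrightarrow> X \<inter> Y = {})"

definition e_count :: "'a set multiset \<Rightarrow> ('a set \<times> 'a) multiset \<Rightarrow> 'a set set \<Rightarrow> nat" where
  "e_count E A P = size (filter_mset (\<lambda>X. \<exists>Y \<in> P. hyperedge_enters X Y) E)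
                 + size (filter_mset (\<lambda>d. \<exists>Y \<in> P. dyperedge_enters d Y) A)"

definition intersecting_supermodular :: "'a set \<Rightarrow> ('a set \<Rightarrow> int) \<Rightarrow> bool" where
  "intersecting_supermodular V h \<longleftrightarrow>
     (\<forall>X Y. X \<subseteq> V \<and> Y \<subseteq> V \<and> X \<inter> Y \<noteq> {} \<longrightarrow> h X + h Y \<le> h (X \<union> Y) + h (X \<inter> Y))"

definition submodular :: "'a set \<Rightarrow> ('a set \<Rightarrow> int) \<Rightarrow> bool" where
  "submodular V b \<longleftrightarrow>
     (\<forall>X Y. X \<subseteq> V \<and> Y \<subseteq> V \<longrightarrow> b X + b Y \<ge> b (X \<union> Y) + b (X \<inter> Y))"

end

(*
  Orient the hyperedges one at a time, keeping the condition for the not yet oriented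
  hyperedges together with the dyperedges.  Fix a hyperedge X and write s(P) for the surplus
  e(P) - h(P) + b(\<Union>P) of a subpartition P with X removed; the condition says s(P) \<ge> -1,
  with equality only if X enters a member of P.  If orienting X towards any head x \<in> X
  violates the condition, some tight subpartition P (s(P) = -1) is not entered by (X - x, x);
  since X enters P, this forces x \<notin> \<Union>P.

  Tight subpartitions can be uncrossed: repeatedly replacing two crossing members of the
  multiset P + Q by their union and intersection gives a laminar family, which splits into
  subpartitions P' and Q' with unions \<Union>P \<union> \<Union>Q and \<Union>P \<inter> \<Union>Q.  Supermodularity of h,
  submodularity of b and of the entering counts give s(P') + s(Q') \<le> s(P) + s(Q) = -2, so Q'
  is tight again.  Intersecting the tight subpartitions for all heads x \<in> X yields a tight
  subpartition avoiding X, which X would have to enter: a contradiction.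
*)

theory Submission
  imports Defs
begin

section \<open>Uncrossing multisets of sets\<close>

inductive uncross_step :: "'a set multiset \<Rightarrow> 'a set multiset \<Rightarrow> bool" where
  "X \<inter> Y \<noteq> {} \<Longrightarrow> \<not> X \<subseteq> Y \<Longrightarrow> \<not> Y \<subseteq> X \<Longrightarrow>
   uncross_step (G + {#X, Y#}) (G + {#X \<union> Y, X \<inter> Y#})"

definition laminar_mset :: "'a set multiset \<Rightarrow> bool" where
  "laminar_mset F \<longleftrightarrow> (\<forall>X Y. {#X, Y#} \<subseteq># F \<longrightarrow> X \<inter> Y = {} \<or> X \<subseteq> Y \<or> Y \<subseteq> X)"

lemma size_uncross:
  assumes "uncross_step\<^sup>*\<^sup>* F F'"
  shows "size F' = size F"
  using assms by induction (auto elim: uncross_step.cases)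

lemma uncross_members:
  assumes "uncross_step\<^sup>*\<^sup>* F F'" and "set_mset F \<subseteq> Pow V - {{}}"
  shows "set_mset F' \<subseteq> Pow V - {{}}"
  using assms
proof induction
  case (step F' F'')
  from step.hyps(2) show ?case
  proof cases
    case (1 X Y G)
    with step.IH step.prems show ?thesis
      by auto
  qed
qed simp

lemma sum_mset_uncross_mono:
  assumes f: "intersecting_supermodular V f"
    and "uncross_step\<^sup>*\<^sup>* F F'" and F: "set_mset F \<subseteq> Pow V - {{}}"
  shows "(\<Sum>Y\<in>#F. f Y) \<le> (\<Sum>Y\<in>#F'. f Y)"
  using assms(2)
proof (induction rule: rtranclp_induct)
  case (step F' F'')
  have "set_mset F' \<subseteq> Pow V - {{}}"
    using uncross_members[OF step.hyps(1) F] .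
  with step.hyps(2) have "(\<Sum>Y\<in>#F'. f Y) \<le> (\<Sum>Y\<in>#F''. f Y)"
    by cases (use f in \<open>auto simp: intersecting_supermodular_def\<close>)
  with step.IH show ?case by simp
qed simp

lemma not_laminar_uncross_step:
  assumes "\<not> laminar_mset F"
  obtains F' where "uncross_step F F'"
proof -
  obtain X Y where XY: "{#X, Y#} \<subseteq># F" "X \<inter> Y \<noteq> {}" "\<not> X \<subseteq> Y" "\<not> Y \<subseteq> X"
    using assms unfolding laminar_mset_def by blast
  then have "F = (F - {#X, Y#}) + {#X, Y#}"
    by (metis subset_mset.diff_add)
  with XY(2-4) show thesis
    by (metis that uncross_step.intros)
qed

lemma sum_squares_less_spread:
  fixes a b s t :: nat
  assumes "s + t = a + b" "t < a" "t < b"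
  shows "a ^ 2 + b ^ 2 < s ^ 2 + t ^ 2"
proof -
  obtain p q where "a = Suc (t + p)" "b = Suc (t + q)"
    using assms(2,3) by (metis less_imp_Suc_add)
  moreover have "s = a + b - t"
    using assms(1) by simp
  ultimately show ?thesis
    by (simp add: power2_eq_square algebra_simps)
qed

lemma sum_card_squares_uncross_step:
  assumes "uncross_step F F'" and "\<forall>X\<in>#F. finite X"
  shows "(\<Sum>Y\<in>#F. card Y ^ 2) < (\<Sum>Y\<in>#F'. card Y ^ 2)"
  using assms(1)
proof cases
  case (1 X Y G)
  have "finite X" "finite Y"
    using assms(2) 1 by auto
  then have "card X ^ 2 + card Y ^ 2 < card (X \<union> Y) ^ 2 + card (X \<inter> Y) ^ 2"
    using 1 by (intro sum_squares_less_spread card_Un_Int[symmetric] psubset_card_mono) auto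
  with 1 show ?thesis
    by simp
qed

lemma exists_laminar_uncrossing:
  assumes "finite V" and F0: "set_mset F0 \<subseteq> Pow V - {{}}"
  obtains F where "uncross_step\<^sup>*\<^sup>* F0 F" "laminar_mset F"
proof -
  let ?mu = "\<lambda>F. \<Sum>Y\<in>#F. card Y ^ 2"
  have bounded: "?mu F < size F0 * card V ^ 2 + 1" if "uncross_step\<^sup>*\<^sup>* F0 F" for F
  proof -
    have "?mu F \<le> (\<Sum>Y\<in>#F. card V ^ 2)"
      using uncross_members[OF that F0] \<open>finite V\<close>
      by (intro sum_mset_mono power_mono card_mono) auto
    then show ?thesis
      using size_uncross[OF that] by simp
  qed
  obtain F where F: "uncross_step\<^sup>*\<^sup>* F0 F"
    and max: "\<And>F'. uncross_step\<^sup>*\<^sup>* F0 F' \<Longrightarrow> ?mu F' \<le> ?mu F"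
    using ex_has_greatest_nat[of "uncross_step\<^sup>*\<^sup>* F0" F0 ?mu] bounded by blast
  have "laminar_mset F"
  proof (rule ccontr)
    assume "\<not> laminar_mset F"
    then obtain F' where step: "uncross_step F F'"
      by (rule not_laminar_uncross_step)
    have "\<forall>X\<in>#F. finite X"
      using uncross_members[OF F F0] \<open>finite V\<close> finite_subset by auto
    then have "?mu F < ?mu F'"
      by (rule sum_card_squares_uncross_step[OF step])
    with max[of F'] F step show False
      by (meson not_le rtranclp.rtrancl_into_rtrancl)
  qed
  with F that show thesis
    by blast
qed

lemma two_le_size_filter_mset:
  assumes "{#X, Y#} \<subseteq># F" "p X" "p Y"
  shows "2 \<le> size (filter_mset p F)"
proof -
  have "{#X, Y#} \<subseteq># filter_mset p F"
    using multiset_filter_mono[OF assms(1), of p] assms(2,3) by simp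
  from size_mset_mono[OF this] show ?thesis
    by simp
qed

lemma pair_subset_mset:
  assumes "X \<in># F" "Y \<in># F" "X \<noteq> Y"
  shows "{#X, Y#} \<subseteq># F"
  using assms by (simp add: insert_subset_eq_iff in_diff_count)

lemma coverage_le_1_disjoint:
  assumes nonempty: "{} \<notin># G" and cover: "\<And>v. size {#Y \<in># G. v \<in> Y#} \<le> 1"
  shows "mset_set (set_mset G) = G" and "\<forall>X\<in>#G. \<forall>Y\<in>#G. X \<noteq> Y \<longrightarrow> X \<inter> Y = {}"
proof -
  have no_pair: False if "{#X, Y#} \<subseteq># G" "v \<in> X" "v \<in> Y" for X Y v
    using two_le_size_filter_mset[OF that] cover[of v] by simp
  show "mset_set (set_mset G) = G"
  proof (rule multiset_eqI)
    fix X
    show "count (mset_set (set_mset G)) X = count G X"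
    proof (cases "X \<in># G")
      case True
      then obtain v where "v \<in> X"
        using nonempty by (metis all_not_in_conv)
      have "count G X \<le> 1"
      proof (rule ccontr)
        assume "\<not> count G X \<le> 1"
        then have "{#X, X#} \<subseteq># G"
          by (simp add: subseteq_mset_def)
        with \<open>v \<in> X\<close> no_pair show False
          by blast
      qed
      with True show ?thesis
        by (simp add: le_Suc_eq count_eq_zero_iff)
    qed (simp add: not_in_iff)
  qed
  show "\<forall>X\<in>#G. \<forall>Y\<in>#G. X \<noteq> Y \<longrightarrow> X \<inter> Y = {}"
  proof (intro ballI impI)
    fix X Y
    assume "X \<in># G" "Y \<in># G" "X \<noteq> Y"
    then have "{#X, Y#} \<subseteq># G"
      by (rule pair_subset_mset)
    then show "X \<inter> Y = {}"
      using no_pair by blast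
  qed
qed

definition maximal_members :: "'a set multiset \<Rightarrow> 'a set set" where
  "maximal_members F = {X \<in> set_mset F. \<forall>Y\<in>#F. X \<subseteq> Y \<longrightarrow> Y = X}"

lemma finite_maximal_members: "finite (maximal_members F)"
  unfolding maximal_members_def by simp

lemma mset_set_maximal_members_subset: "mset_set (maximal_members F) \<subseteq># F"
  by (rule subset_mset.order_trans[OF subset_imp_msubset_mset_set mset_set_set_mset_msubset])
    (auto simp: maximal_members_def)

lemma exists_maximal_member:
  assumes "X \<in># F"
  obtains M where "M \<in> maximal_members F" "X \<subseteq> M"
proof -
  have "finite {Y \<in> set_mset F. X \<subseteq> Y}" "{Y \<in> set_mset F. X \<subseteq> Y} \<noteq> {}"
    using assms by auto
  then obtain M where "M \<in> {Y \<in> set_mset F. X \<subseteq> Y}"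
    "\<forall>Y\<in>{Y \<in> set_mset F. X \<subseteq> Y}. M \<subseteq> Y \<longrightarrow> M = Y"
    by (meson finite_has_maximal)
  with that show thesis
    unfolding maximal_members_def by force
qed

lemma laminar_maximal_members_disjoint:
  assumes "laminar_mset F" "X \<in> maximal_members F" "Y \<in> maximal_members F" "X \<noteq> Y"
  shows "X \<inter> Y = {}"
proof -
  have "{#X, Y#} \<subseteq># F"
    using assms(2-4) by (intro pair_subset_mset) (auto simp: maximal_members_def)
  then have "X \<inter> Y = {} \<or> X \<subseteq> Y \<or> Y \<subseteq> X"
    using assms(1) unfolding laminar_mset_def by blast
  then show ?thesis
    using assms(2-4) unfolding maximal_members_def by auto
qed

lemma laminar_mset_split:
  assumes lam: "laminar_mset F" and members: "set_mset F \<subseteq> Pow V - {{}}"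
    and cover: "\<And>v. size {#Y \<in># F. v \<in> Y#} \<le> 2"
  obtains P Q where "F = mset_set P + mset_set Q" "subpartition V P" "subpartition V Q"
    "\<Union>Q \<subseteq> \<Union>P"
proof -
  define P where "P = maximal_members F"
  obtain G where F: "F = mset_set P + G"
    using mset_set_maximal_members_subset unfolding P_def by (metis subset_mset.le_iff_add)
  have below_maximal: "\<exists>M\<in>P. X \<subseteq> M" if "X \<in># F" for X
    using exists_maximal_member[OF that] unfolding P_def by blast
  \<comment> \<open>A point of a member of \<open>G\<close> also lies in a maximal member, already counted once in \<open>mset_set P\<close>.\<close>
  have cover_G: "size {#Y \<in># G. v \<in> Y#} \<le> 1" for v
  proof (cases "\<exists>X\<in>#G. v \<in> X")
    case True
    then obtain M where "M \<in> P" "v \<in> M"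
      using below_maximal F by fastforce
    then have "{#M#} \<subseteq># {#Y \<in># mset_set P. v \<in> Y#}"
      using finite_maximal_members[of F] unfolding P_def[symmetric] by simp
    from size_mset_mono[OF this] have "1 \<le> size {#Y \<in># mset_set P. v \<in> Y#}"
      by simp
    then show ?thesis
      using cover[of v] unfolding F by simp
  next
    case False
    then have "size {#Y \<in># G. v \<in> Y#} = 0"
      by simp
    then show ?thesis
      by linarith
  qed
  have "{} \<notin># G"
    using members F by auto
  note G = coverage_le_1_disjoint[OF this cover_G]
  show thesis
  proof
    show "F = mset_set P + mset_set (set_mset G)"
      using F G(1) by simp
    have "P \<subseteq> set_mset F"
      unfolding P_def maximal_members_def by blast
    with members show "subpartition V P"
      using laminar_maximal_members_disjoint[OF lam] unfolding subpartition_def P_def by blast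
    show "subpartition V (set_mset G)"
      using members G(2) unfolding subpartition_def F by auto
    show "\<Union>(set_mset G) \<subseteq> \<Union>P"
      using below_maximal F by fastforce
  qed
qed

section \<open>Uncrossing subpartitions\<close>

abbreviation hyperedge_enters_some :: "'a set \<Rightarrow> 'a set set \<Rightarrow> bool" where
  "hyperedge_enters_some e P \<equiv> \<exists>Y\<in>P. hyperedge_enters e Y"

abbreviation dyperedge_enters_some :: "'a set \<times> 'a \<Rightarrow> 'a set set \<Rightarrow> bool" where
  "dyperedge_enters_some d P \<equiv> \<exists>Y\<in>P. dyperedge_enters d Y"

lemma subpartition_finite:
  assumes "finite V" "subpartition V P"
  shows "finite P"
  using assms unfolding subpartition_def by (meson PowI finite_Pow_iff finite_subset subsetI)

lemma of_nat_size_filter_mset: "of_nat (size (filter_mset p M)) = (\<Sum>x\<in>#M. of_bool (p x))"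
  by (induction M) auto

lemma sum_mset_uminus: "(\<Sum>x\<in>#M. - f x) = - (\<Sum>x\<in>#M. f x :: 'b::ab_group_add)"
  by (induction M) auto

lemma e_count_eq_sum:
  "int (e_count E A P) =
     (\<Sum>e\<in>#E. of_bool (hyperedge_enters_some e P)) + (\<Sum>d\<in>#A. of_bool (dyperedge_enters_some d P))"
  unfolding e_count_def by (simp add: of_nat_size_filter_mset)

lemma sum_of_bool_subpartition:
  assumes "subpartition V P" "finite P" and overlap: "\<And>X Y. p X \<Longrightarrow> p Y \<Longrightarrow> X \<inter> Y \<noteq> {}"
  shows "(\<Sum>X\<in>P. of_bool (p X)) = (of_bool (\<exists>X\<in>P. p X) :: 'b::semiring_1)"
proof (cases "\<exists>X\<in>P. p X")
  case True
  then obtain X where "X \<in> P" "p X"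
    by blast
  moreover have "Y = X" if "Y \<in> P" "p Y" for Y
    using assms(1) overlap[OF \<open>p Y\<close> \<open>p X\<close>] that \<open>X \<in> P\<close> unfolding subpartition_def by blast
  ultimately have "P \<inter> {X. p X} = {X}"
    by blast
  with True show ?thesis
    using assms(2) by (simp add: sum_of_bool_eq)
qed (simp add: sum_of_bool_eq)

lemma hyperedge_enters_some_iff:
  assumes "subpartition V P"
  shows "hyperedge_enters_some e P \<longleftrightarrow> e \<inter> \<Union>P \<noteq> {} \<and> \<not> (\<exists>Y\<in>P. e \<subseteq> Y)"
proof
  assume "hyperedge_enters_some e P"
  then obtain Y where Y: "Y \<in> P" "e \<inter> Y \<noteq> {}" "\<not> e \<subseteq> Y"
    unfolding hyperedge_enters_def by blast
  moreover have "Y' = Y" if "Y' \<in> P" "e \<subseteq> Y'" for Y'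
    using assms that Y(1,2) unfolding subpartition_def by blast
  ultimately show "e \<inter> \<Union>P \<noteq> {} \<and> \<not> (\<exists>Y\<in>P. e \<subseteq> Y)"
    by blast
qed (auto simp: hyperedge_enters_def)

lemma hyperedge_enters_some_uncross:
  fixes P Q P' Q' :: "'a set set"
  assumes "finite V" "subpartition V P" "subpartition V Q" "subpartition V P'" "subpartition V Q'"
    and "\<Union>P' = \<Union>P \<union> \<Union>Q" "\<Union>Q' = \<Union>P \<inter> \<Union>Q"
    and contained: "(\<Sum>Y\<in>P. of_bool (e \<subseteq> Y)) + (\<Sum>Y\<in>Q. of_bool (e \<subseteq> Y))
      \<le> ((\<Sum>Y\<in>P'. of_bool (e \<subseteq> Y)) + (\<Sum>Y\<in>Q'. of_bool (e \<subseteq> Y)) :: int)"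
  shows "of_bool (hyperedge_enters_some e P') + of_bool (hyperedge_enters_some e Q')
    \<le> (of_bool (hyperedge_enters_some e P) + of_bool (hyperedge_enters_some e Q) :: int)"
proof (cases "e = {}")
  case False
  \<comment> \<open>A nonempty \<open>e\<close> lies in at most one member and then meets the union,
    so entering is meeting minus containment.\<close>
  have enters: "of_bool (hyperedge_enters_some e R)
      = of_bool (e \<inter> \<Union>R \<noteq> {}) - (\<Sum>Y\<in>R. of_bool (e \<subseteq> Y) :: int)" if R: "subpartition V R" for R
  proof -
    have "(\<Sum>Y\<in>R. of_bool (e \<subseteq> Y)) = (of_bool (\<exists>Y\<in>R. e \<subseteq> Y) :: int)"
      using False by (intro sum_of_bool_subpartition[OF R subpartition_finite[OF \<open>finite V\<close> R]]) blast
    moreover have "(\<exists>Y\<in>R. e \<subseteq> Y) \<Longrightarrow> e \<inter> \<Union>R \<noteq> {}"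
      using False by blast
    ultimately show ?thesis
      by (auto simp: hyperedge_enters_some_iff[OF R])
  qed
  have meets: "of_bool (e \<inter> (\<Union>P \<union> \<Union>Q) \<noteq> {}) + of_bool (e \<inter> (\<Union>P \<inter> \<Union>Q) \<noteq> {})
      \<le> (of_bool (e \<inter> \<Union>P \<noteq> {}) + of_bool (e \<inter> \<Union>Q \<noteq> {}) :: int)"
    by auto
  show ?thesis
    using contained meets enters[OF assms(2)] enters[OF assms(3)]
      enters[OF assms(4), unfolded assms(6)] enters[OF assms(5), unfolded assms(7)]
    by linarith
qed (simp add: hyperedge_enters_def)

lemma e_count_uncross_le:
  assumes "\<And>e. of_bool (hyperedge_enters_some e P') + of_bool (hyperedge_enters_some e Q')
      \<le> (of_bool (hyperedge_enters_some e P) + of_bool (hyperedge_enters_some e Q) :: int)"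
    and "\<And>d. of_bool (dyperedge_enters_some d P') + of_bool (dyperedge_enters_some d Q')
      \<le> (of_bool (dyperedge_enters_some d P) + of_bool (dyperedge_enters_some d Q) :: int)"
  shows "e_count E A P' + e_count E A Q' \<le> e_count E A P + e_count E A Q"
proof -
  have "(\<Sum>e\<in>#E. of_bool (hyperedge_enters_some e P') + of_bool (hyperedge_enters_some e Q'))
      \<le> (\<Sum>e\<in>#E. of_bool (hyperedge_enters_some e P) + (of_bool (hyperedge_enters_some e Q) :: int))"
    by (rule sum_mset_mono) (rule assms(1))
  moreover have "(\<Sum>d\<in>#A. of_bool (dyperedge_enters_some d P') + of_bool (dyperedge_enters_some d Q'))
      \<le> (\<Sum>d\<in>#A. of_bool (dyperedge_enters_some d P) + (of_bool (dyperedge_enters_some d Q) :: int))"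
    by (rule sum_mset_mono) (rule assms(2))
  ultimately have "int (e_count E A P') + int (e_count E A Q') \<le> int (e_count E A P) + int (e_count E A Q)"
    unfolding e_count_eq_sum sum_mset.distrib by linarith
  then show ?thesis
    by linarith
qed

lemma sum_of_bool_mem_subpartition:
  assumes "subpartition V P" "finite P"
  shows "(\<Sum>Y\<in>P. of_bool (v \<in> Y)) = (of_bool (v \<in> \<Union>P) :: 'b::semiring_1)"
  by (subst sum_of_bool_subpartition[OF assms]) auto

lemma sum_of_bool_dyperedge_enters_subpartition:
  assumes "subpartition V P" "finite P"
  shows "(\<Sum>Y\<in>P. of_bool (dyperedge_enters d Y)) = (of_bool (dyperedge_enters_some d P) :: 'b::semiring_1)"
  by (rule sum_of_bool_subpartition[OF assms]) (auto simp: dyperedge_enters_def)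

lemma union_inter_of_coverage:
  fixes A B C D :: "'a set"
  assumes "D \<subseteq> C"
    and cover: "\<And>v. of_bool (v \<in> C) + of_bool (v \<in> D) = (of_bool (v \<in> A) + of_bool (v \<in> B) :: int)"
  shows "C = A \<union> B" "D = A \<inter> B"
proof -
  have "v \<in> C \<longleftrightarrow> v \<in> A \<union> B" "v \<in> D \<longleftrightarrow> v \<in> A \<inter> B" for v
    using cover[of v] assms(1)
    by (cases "v \<in> A"; cases "v \<in> B"; cases "v \<in> C"; cases "v \<in> D"; simp only: Un_iff Int_iff of_bool_eq; auto)+
  then show "C = A \<union> B" "D = A \<inter> B"
    by blast+
qed

lemma subpartitions_uncross_supermodular:
  assumes "finite V"
    and P: "subpartition V P" "{} \<notin> P" and Q: "subpartition V Q" "{} \<notin> Q"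
  obtains P' Q' where "subpartition V P'" "{} \<notin> P'" "subpartition V Q'" "{} \<notin> Q'"
    "\<Union>Q' \<subseteq> \<Union>P'"
    "\<And>f. intersecting_supermodular V f \<Longrightarrow> sum f P + sum f Q \<le> sum f P' + sum f Q'"
proof -
  have "finite P" "finite Q"
    using subpartition_finite \<open>finite V\<close> P Q by blast+
  define F0 where "F0 = mset_set P + mset_set Q"
  have F0: "set_mset F0 \<subseteq> Pow V - {{}}"
    using P Q \<open>finite P\<close> \<open>finite Q\<close> unfolding F0_def subpartition_def by auto
  obtain F where F: "uncross_step\<^sup>*\<^sup>* F0 F" "laminar_mset F"
    using exists_laminar_uncrossing[OF \<open>finite V\<close> F0] by blast
  have F_members: "set_mset F \<subseteq> Pow V - {{}}"
    by (rule uncross_members[OF F(1) F0])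
  have mono: "sum f P + sum f Q \<le> (\<Sum>Y\<in>#F. f Y)" if "intersecting_supermodular V f" for f
    using sum_mset_uncross_mono[OF that F(1) F0] unfolding F0_def by (simp add: sum_unfold_sum_mset)
  have cover: "size {#Y \<in># F. v \<in> Y#} \<le> 2" for v
  proof -
    have "intersecting_supermodular V (\<lambda>Y. - of_bool (v \<in> Y))"
      unfolding intersecting_supermodular_def by auto
    from mono[OF this] have "(\<Sum>Y\<in>#F. of_bool (v \<in> Y)) \<le> (\<Sum>Y\<in>P. of_bool (v \<in> Y)) + (\<Sum>Y\<in>Q. of_bool (v \<in> Y) :: int)"
      by (simp add: sum_negf sum_mset_uminus)
    also have "\<dots> \<le> 2"
      unfolding sum_of_bool_mem_subpartition[OF P(1) \<open>finite P\<close>]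
        sum_of_bool_mem_subpartition[OF Q(1) \<open>finite Q\<close>] by simp
    finally show ?thesis
      unfolding of_nat_size_filter_mset[symmetric] by simp
  qed
  obtain P' Q' where split: "F = mset_set P' + mset_set Q'" "subpartition V P'" "subpartition V Q'"
    "\<Union>Q' \<subseteq> \<Union>P'"
    using laminar_mset_split[OF F(2) F_members cover] by blast
  have "finite P'" "finite Q'"
    using subpartition_finite \<open>finite V\<close> split by blast+
  show thesis
  proof
    show "{} \<notin> P'" "{} \<notin> Q'"
      using F_members \<open>finite P'\<close> \<open>finite Q'\<close> unfolding split(1) by auto
    show "sum f P + sum f Q \<le> sum f P' + sum f Q'" if "intersecting_supermodular V f" for f
      using mono[OF that] \<open>finite P'\<close> \<open>finite Q'\<close> unfolding split(1) by (simp add: sum_unfold_sum_mset)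
  qed (use split in auto)
qed

lemma subpartition_uncrossing:
  assumes "finite V" and h: "intersecting_supermodular V h"
    and P: "subpartition V P" "{} \<notin> P" and Q: "subpartition V Q" "{} \<notin> Q"
  obtains P' Q' where "subpartition V P'" "{} \<notin> P'" "subpartition V Q'" "{} \<notin> Q'"
    "\<Union>P' = \<Union>P \<union> \<Union>Q" "\<Union>Q' = \<Union>P \<inter> \<Union>Q"
    "sum h P + sum h Q \<le> sum h P' + sum h Q'"
    "\<And>E A. e_count E A P' + e_count E A Q' \<le> e_count E A P + e_count E A Q"
proof -
  obtain P' Q' where P': "subpartition V P'" "{} \<notin> P'" and Q': "subpartition V Q'" "{} \<notin> Q'"
    and nested: "\<Union>Q' \<subseteq> \<Union>P'"
    and super: "\<And>f. intersecting_supermodular V f \<Longrightarrow> sum f P + sum f Q \<le> sum f P' + sum f Q'"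
    using subpartitions_uncross_supermodular[OF \<open>finite V\<close> P Q] by blast
  have fin: "finite P" "finite Q" "finite P'" "finite Q'"
    using subpartition_finite \<open>finite V\<close> P(1) Q(1) P'(1) Q'(1) by blast+
  have cover: "of_bool (v \<in> \<Union>P') + of_bool (v \<in> \<Union>Q') = (of_bool (v \<in> \<Union>P) + of_bool (v \<in> \<Union>Q) :: int)"
    for v
  proof -
    have "intersecting_supermodular V (\<lambda>Y. of_bool (v \<in> Y))"
      "intersecting_supermodular V (\<lambda>Y. - of_bool (v \<in> Y))"
      unfolding intersecting_supermodular_def by auto
    from this[THEN super] show ?thesis
      unfolding sum_negf sum_of_bool_mem_subpartition[OF P(1) fin(1)]
        sum_of_bool_mem_subpartition[OF Q(1) fin(2)] sum_of_bool_mem_subpartition[OF P'(1) fin(3)]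
        sum_of_bool_mem_subpartition[OF Q'(1) fin(4)]
      by linarith
  qed
  have unions: "\<Union>P' = \<Union>P \<union> \<Union>Q" "\<Union>Q' = \<Union>P \<inter> \<Union>Q"
    using union_inter_of_coverage[OF nested cover] by blast+
  show thesis
  proof (rule that[OF P' Q' unions super[OF h]])
    fix E A
    show "e_count E A P' + e_count E A Q' \<le> e_count E A P + e_count E A Q"
    proof (rule e_count_uncross_le)
      fix e
      have "intersecting_supermodular V (\<lambda>Y. of_bool (e \<subseteq> Y))"
        unfolding intersecting_supermodular_def by auto
      from super[OF this] show "of_bool (hyperedge_enters_some e P') + of_bool (hyperedge_enters_some e Q')
        \<le> (of_bool (hyperedge_enters_some e P) + of_bool (hyperedge_enters_some e Q) :: int)"
        by (rule hyperedge_enters_some_uncross[OF \<open>finite V\<close> P(1) Q(1) P'(1) Q'(1) unions])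
    next
      fix d
      have "intersecting_supermodular V (\<lambda>Y. - of_bool (dyperedge_enters d Y))"
        unfolding intersecting_supermodular_def dyperedge_enters_def by auto
      from super[OF this] show "of_bool (dyperedge_enters_some d P') + of_bool (dyperedge_enters_some d Q')
        \<le> (of_bool (dyperedge_enters_some d P) + of_bool (dyperedge_enters_some d Q) :: int)"
        unfolding sum_negf sum_of_bool_dyperedge_enters_subpartition[OF P(1) fin(1)]
          sum_of_bool_dyperedge_enters_subpartition[OF Q(1) fin(2)]
          sum_of_bool_dyperedge_enters_subpartition[OF P'(1) fin(3)]
          sum_of_bool_dyperedge_enters_subpartition[OF Q'(1) fin(4)]
        by linarith
    qed
  qed
qed

section \<open>Orienting one hyperedge\<close>

definition partition_bound ::
    "'a set \<Rightarrow> ('a set \<Rightarrow> int) \<Rightarrow> ('a set \<Rightarrow> int) \<Rightarrow> 'a set multiset \<Rightarrow> ('a set \<times> 'a) multiset \<Rightarrow> bool" where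
  "partition_bound V h b E A \<longleftrightarrow>
     (\<forall>P. subpartition V P \<longrightarrow> int (e_count E A P) \<ge> (\<Sum>X\<in>P. h X) - b (\<Union>P))"

definition nonempty_partition_bound ::
    "'a set \<Rightarrow> ('a set \<Rightarrow> int) \<Rightarrow> ('a set \<Rightarrow> int) \<Rightarrow> 'a set multiset \<Rightarrow> ('a set \<times> 'a) multiset \<Rightarrow> bool" where
  "nonempty_partition_bound V h b E A \<longleftrightarrow>
     (\<forall>P. subpartition V P \<and> {} \<notin> P \<longrightarrow> int (e_count E A P) \<ge> (\<Sum>X\<in>P. h X) - b (\<Union>P))"

lemma e_count_remove_empty: "e_count E A (P - {{}}) = e_count E A P"
proof -
  have "hyperedge_enters_some e (P - {{}}) \<longleftrightarrow> hyperedge_enters_some e P" for e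
    unfolding hyperedge_enters_def by blast
  moreover have "dyperedge_enters_some d (P - {{}}) \<longleftrightarrow> dyperedge_enters_some d P" for d
    unfolding dyperedge_enters_def by blast
  ultimately show ?thesis
    unfolding e_count_def by simp
qed

text \<open>Empty members are entered by nothing and only contribute \<open>h {}\<close>, so they can be traded
  for a constant shift of \<open>b\<close>; afterwards only subpartitions without empty members matter.\<close>

lemma partition_bound_iff_nonempty:
  assumes "finite V"
  shows "partition_bound V h b E A \<longleftrightarrow> nonempty_partition_bound V h (\<lambda>U. b U - max 0 (h {})) E A"
proof
  assume bound: "partition_bound V h b E A"
  show "nonempty_partition_bound V h (\<lambda>U. b U - max 0 (h {})) E A"
    unfolding nonempty_partition_bound_def
  proof (intro allI impI, elim conjE)
    fix P
    assume P: "subpartition V P" "{} \<notin> P"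
    then have "subpartition V (insert {} P)" "finite P"
      using subpartition_finite[OF assms] unfolding subpartition_def by auto
    moreover have "e_count E A (insert {} P) = e_count E A P"
      by (metis e_count_remove_empty Diff_insert_absorb P(2))
    ultimately have "int (e_count E A P) \<ge> h {} + (\<Sum>X\<in>P. h X) - b (\<Union>P)"
      using bound P(2) unfolding partition_bound_def by force
    moreover have "int (e_count E A P) \<ge> (\<Sum>X\<in>P. h X) - b (\<Union>P)"
      using bound P(1) unfolding partition_bound_def by blast
    ultimately show "int (e_count E A P) \<ge> (\<Sum>X\<in>P. h X) - (b (\<Union>P) - max 0 (h {}))"
      by (simp add: max_def)
  qed
next
  assume bound: "nonempty_partition_bound V h (\<lambda>U. b U - max 0 (h {})) E A"
  show "partition_bound V h b E A"
    unfolding partition_bound_def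
  proof (intro allI impI)
    fix P
    assume P: "subpartition V P"
    then have "subpartition V (P - {{}})" "finite P"
      using subpartition_finite[OF assms] unfolding subpartition_def by auto
    moreover have "(\<Sum>X\<in>P. h X) \<le> (\<Sum>X\<in>P - {{}}. h X) + max 0 (h {})"
      using \<open>finite P\<close> by (cases "{} \<in> P") (auto simp: sum.remove)
    moreover have "\<Union>(P - {{}}) = \<Union>P"
      by auto
    ultimately have "int (e_count E A P) \<ge> (\<Sum>X\<in>P - {{}}. h X) - (b (\<Union>P) - max 0 (h {}))"
      using bound unfolding nonempty_partition_bound_def by (metis Diff_iff e_count_remove_empty singletonI)
    with \<open>(\<Sum>X\<in>P. h X) \<le> (\<Sum>X\<in>P - {{}}. h X) + max 0 (h {})\<close>
    show "int (e_count E A P) \<ge> (\<Sum>X\<in>P. h X) - b (\<Union>P)"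
      by linarith
  qed
qed

definition surplus ::
    "('a set \<Rightarrow> int) \<Rightarrow> ('a set \<Rightarrow> int) \<Rightarrow> 'a set multiset \<Rightarrow> ('a set \<times> 'a) multiset \<Rightarrow> 'a set set \<Rightarrow> int"
  where "surplus h b E A P = int (e_count E A P) - (\<Sum>X\<in>P. h X) + b (\<Union>P)"

lemma e_count_add_hyperedge:
  "int (e_count (add_mset X E) A P) = int (e_count E A P) + of_bool (hyperedge_enters_some X P)"
  unfolding e_count_def by simp

lemma e_count_add_dyperedge:
  "int (e_count E (add_mset d A) P) = int (e_count E A P) + of_bool (dyperedge_enters_some d P)"
  unfolding e_count_def by simp

lemma surplus_add_hyperedge_nonneg:
  assumes "nonempty_partition_bound V h b (add_mset X E) A" "subpartition V P" "{} \<notin> P"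
  shows "0 \<le> surplus h b E A P + of_bool (hyperedge_enters_some X P)"
proof -
  have "(\<Sum>X\<in>P. h X) - b (\<Union>P) \<le> int (e_count (add_mset X E) A P)"
    using assms unfolding nonempty_partition_bound_def by blast
  then show ?thesis
    unfolding surplus_def e_count_add_hyperedge by linarith
qed

lemma tight_subpartitions_intersect:
  assumes "finite V" "intersecting_supermodular V h" and b: "submodular V b"
    and bound: "nonempty_partition_bound V h b (add_mset X E) A"
    and P: "subpartition V P" "{} \<notin> P" "surplus h b E A P = -1"
    and Q: "subpartition V Q" "{} \<notin> Q" "surplus h b E A Q = -1"
  obtains R where "subpartition V R" "{} \<notin> R" "surplus h b E A R = -1" "\<Union>R = \<Union>P \<inter> \<Union>Q"
proof -
  obtain P' Q' where P': "subpartition V P'" "{} \<notin> P'" and Q': "subpartition V Q'" "{} \<notin> Q'"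
    and unions: "\<Union>P' = \<Union>P \<union> \<Union>Q" "\<Union>Q' = \<Union>P \<inter> \<Union>Q"
    and h_sum: "sum h P + sum h Q \<le> sum h P' + sum h Q'"
    and count: "e_count E A P' + e_count E A Q' \<le> e_count E A P + e_count E A Q"
    using subpartition_uncrossing[OF assms(1,2) P(1,2) Q(1,2)] by metis
  have "\<Union>P \<subseteq> V" "\<Union>Q \<subseteq> V"
    using P(1) Q(1) unfolding subpartition_def by auto
  then have "b (\<Union>P') + b (\<Union>Q') \<le> b (\<Union>P) + b (\<Union>Q)"
    using b unfolding unions submodular_def by simp
  \<comment> \<open>Uncrossing does not increase the total surplus, and by the bound every surplus is at least \<open>-1\<close>.\<close>
  then have "surplus h b E A P' + surplus h b E A Q' \<le> -2"
    using h_sum count P(3) Q(3) unfolding surplus_def by linarith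
  moreover have lower: "-1 \<le> surplus h b E A R" if "subpartition V R" "{} \<notin> R" for R
    using surplus_add_hyperedge_nonneg[OF bound that] unfolding of_bool_def by (auto split: if_splits)
  ultimately have "surplus h b E A Q' = -1"
    using lower[OF P'] lower[OF Q'] by linarith
  with Q' unions(2) show thesis
    using that by blast
qed

lemma tight_subpartition_avoiding_head:
  assumes bound: "nonempty_partition_bound V h b (add_mset X E) A"
    and fail: "\<not> nonempty_partition_bound V h b E (add_mset (X - {x}, x) A)"
  obtains P where "subpartition V P" "{} \<notin> P" "surplus h b E A P = -1" "x \<notin> \<Union>P"
proof -
  obtain P where P: "subpartition V P" "{} \<notin> P"
    and "int (e_count E (add_mset (X - {x}, x) A) P) < (\<Sum>X\<in>P. h X) - b (\<Union>P)"
    using fail unfolding nonempty_partition_bound_def by force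
  then have "surplus h b E A P + of_bool (dyperedge_enters_some (X - {x}, x) P) < 0"
    unfolding surplus_def e_count_add_dyperedge by linarith
  moreover have "0 \<le> surplus h b E A P + of_bool (hyperedge_enters_some X P)"
    by (rule surplus_add_hyperedge_nonneg[OF bound P])
  ultimately have tight: "surplus h b E A P = -1" and enters: "hyperedge_enters_some X P"
    and not_enters: "\<not> dyperedge_enters_some (X - {x}, x) P"
    unfolding of_bool_def by (auto split: if_splits)
  \<comment> \<open>A member containing \<open>x\<close> is entered by \<open>(X - {x}, x)\<close> unless it contains \<open>X\<close>; but \<open>X\<close> enters a member.\<close>
  have "x \<notin> \<Union>P"
  proof
    assume "x \<in> \<Union>P"
    then obtain Y where "Y \<in> P" "x \<in> Y"
      by blast
    with not_enters have "X \<subseteq> Y"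
      unfolding dyperedge_enters_def by auto
    with enters P(1) \<open>Y \<in> P\<close> show False
      unfolding subpartition_def hyperedge_enters_def by blast
  qed
  with P tight show thesis
    using that by blast
qed

lemma orient_hyperedge:
  assumes "finite V" "intersecting_supermodular V h" "submodular V b"
    and X: "finite X" "X \<noteq> {}"
    and bound: "nonempty_partition_bound V h b (add_mset X E) A"
  shows "\<exists>x\<in>X. nonempty_partition_bound V h b E (add_mset (X - {x}, x) A)"
proof (rule ccontr)
  \<comment> \<open>Otherwise every head \<open>x\<close> has a tight witness avoiding \<open>x\<close>; intersecting them all gives a
    tight subpartition avoiding \<open>X\<close>, which \<open>X\<close> must nevertheless enter.\<close>
  assume "\<not> ?thesis"
  then have fail: "\<not> nonempty_partition_bound V h b E (add_mset (X - {x}, x) A)" if "x \<in> X" for x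
    using that by blast
  have avoiding: "\<exists>R. subpartition V R \<and> {} \<notin> R \<and> surplus h b E A R = -1 \<and> S \<inter> \<Union>R = {}"
    if "finite S" "S \<noteq> {}" "S \<subseteq> X" for S
    using that
  proof (induction S rule: finite_ne_induct)
    case (singleton x)
    then obtain P where "subpartition V P" "{} \<notin> P" "surplus h b E A P = -1" "x \<notin> \<Union>P"
      using tight_subpartition_avoiding_head[OF bound fail] by blast
    then show ?case
      by blast
  next
    case (insert x S)
    obtain P where P: "subpartition V P" "{} \<notin> P" "surplus h b E A P = -1" "x \<notin> \<Union>P"
      using tight_subpartition_avoiding_head[OF bound fail] insert.prems by blast
    obtain Q where Q: "subpartition V Q" "{} \<notin> Q" "surplus h b E A Q = -1" "S \<inter> \<Union>Q = {}"
      using insert by blast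
    obtain R where "subpartition V R" "{} \<notin> R" "surplus h b E A R = -1" "\<Union>R = \<Union>P \<inter> \<Union>Q"
      using tight_subpartitions_intersect[OF assms(1-3) bound P(1-3) Q(1-3)] by blast
    with P(4) Q(4) show ?case
      by blast
  qed
  obtain R where R: "subpartition V R" "{} \<notin> R" "surplus h b E A R = -1" "X \<inter> \<Union>R = {}"
    using avoiding[OF X order_refl] by blast
  then have "hyperedge_enters_some X R"
    using surplus_add_hyperedge_nonneg[OF bound R(1,2)] by (auto split: if_splits)
  with R(4) show False
    unfolding hyperedge_enters_def by blast
qed

lemma submodular_diff_const: "submodular V b \<Longrightarrow> submodular V (\<lambda>U. b U - c)"
  unfolding submodular_def by simp

lemma is_orientation_add:
  assumes "is_orientation E D" "x \<in> X"
  shows "is_orientation (add_mset X E) (add_mset (X - {x}, x) D)"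
proof -
  obtain M where "image_mset fst M = E" "\<forall>(X, x)\<in>#M. x \<in> X" "D = image_mset (\<lambda>(X, x). (X - {x}, x)) M"
    using assms(1) unfolding is_orientation_def by blast
  with assms(2) show ?thesis
    unfolding is_orientation_def by (intro exI[of _ "add_mset (X, x) M"]) auto
qed

lemma e_count_orientation_le:
  assumes "is_orientation E D"
  shows "e_count {#} (D + A) P \<le> e_count E A P"
proof -
  obtain M where M: "image_mset fst M = E" "\<forall>(X, x)\<in>#M. x \<in> X"
    "D = image_mset (\<lambda>(X, x). (X - {x}, x)) M"
    using assms unfolding is_orientation_def by blast
  have "of_bool (dyperedge_enters_some (X - {x}, x) P) \<le> (of_bool (hyperedge_enters_some X P) :: int)"
    if "(X, x) \<in># M" for X x
  proof -
    have "x \<in> X"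
      using M(2) that by blast
    then show ?thesis
      unfolding dyperedge_enters_def hyperedge_enters_def by auto
  qed
  then have "(\<Sum>(X, x)\<in>#M. of_bool (dyperedge_enters_some (X - {x}, x) P))
      \<le> (\<Sum>(X, x)\<in>#M. of_bool (hyperedge_enters_some X P) :: int)"
    by (intro sum_mset_mono) auto
  then have "(\<Sum>d\<in>#D. of_bool (dyperedge_enters_some d P)) \<le> (\<Sum>e\<in>#E. of_bool (hyperedge_enters_some e P) :: int)"
    unfolding M(1)[symmetric] M(3) image_mset.compositionality by (simp add: case_prod_beta' comp_def)
  then have "int (e_count {#} (D + A) P) \<le> int (e_count E A P)"
    unfolding e_count_eq_sum by simp
  then show ?thesis
    by simp
qed

lemma partition_bound_orientation:
  assumes D: "is_orientation E D" and bound: "partition_bound V h b {#} (D + A)"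
  shows "partition_bound V h b E A"
  unfolding partition_bound_def
proof (intro allI impI)
  fix P
  assume "subpartition V P"
  then have "(\<Sum>X\<in>P. h X) - b (\<Union>P) \<le> int (e_count {#} (D + A) P)"
    using bound unfolding partition_bound_def by blast
  also have "\<dots> \<le> int (e_count E A P)"
    using e_count_orientation_le[OF D] by simp
  finally show "int (e_count E A P) \<ge> (\<Sum>X\<in>P. h X) - b (\<Union>P)" .
qed

lemma orientation_exists:
  assumes "finite V" "intersecting_supermodular V h" "submodular V b"
    and "\<forall>X\<in>#E. finite X \<and> X \<noteq> {}" and "nonempty_partition_bound V h b E A"
  shows "\<exists>D. is_orientation E D \<and> nonempty_partition_bound V h b {#} (D + A)"
  using assms(4,5)
proof (induction E arbitrary: A)
  case empty
  have "is_orientation {#} {#}"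
    unfolding is_orientation_def by simp
  with empty.prems(2) show ?case
    by auto
next
  case (add X E)
  have "finite X" "X \<noteq> {}"
    using add.prems(1) by auto
  then obtain x where "x \<in> X" and bound: "nonempty_partition_bound V h b E (add_mset (X - {x}, x) A)"
    using orient_hyperedge[OF assms(1-3) _ _ add.prems(2)] by blast
  obtain D where D: "is_orientation E D" "nonempty_partition_bound V h b {#} (D + add_mset (X - {x}, x) A)"
    using add.IH[OF _ bound] add.prems(1) by auto
  have "is_orientation (add_mset X E) (add_mset (X - {x}, x) D)"
    by (rule is_orientation_add[OF D(1) \<open>x \<in> X\<close>])
  with D(2) show ?case
    by (intro exI[of _ "add_mset (X - {x}, x) D"]) simp
qed

lemma mixed_hypergraph_hyperedges:
  assumes "finite V" "mixed_hypergraph V E A"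
  shows "\<forall>X\<in>#E. finite X \<and> X \<noteq> {}"
proof
  fix X
  assume "X \<in># E"
  then have "X \<subseteq> V" "2 \<le> card X"
    using assms(2) unfolding mixed_hypergraph_def by blast+
  then show "finite X \<and> X \<noteq> {}"
    using assms(1) finite_subset by fastforce
qed

theorem mainTheorem1:
  fixes V :: "'a set" and E :: "'a set multiset" and A :: "('a set \<times> 'a) multiset"
    and h b :: "'a set \<Rightarrow> int"
  assumes "finite V"
    and "mixed_hypergraph V E A"
    and "intersecting_supermodular V h"
    and "submodular V b"
  shows "(\<exists>D. is_orientation E D \<and>
            (\<forall>P. subpartition V P \<longrightarrow>
               int (e_count {#} (D + A) P) \<ge> (\<Sum>X\<in>P. h X) - b (\<Union>P)))
         \<longleftrightarrow>
         (\<forall>P. subpartition V P \<longrightarrow>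
               int (e_count E A P) \<ge> (\<Sum>X\<in>P. h X) - b (\<Union>P))"
proof -
  let ?b = "\<lambda>U. b U - max 0 (h {})"
  have "(\<exists>D. is_orientation E D \<and> partition_bound V h b {#} (D + A)) \<longleftrightarrow> partition_bound V h b E A"
  proof
    assume "\<exists>D. is_orientation E D \<and> partition_bound V h b {#} (D + A)"
    then show "partition_bound V h b E A"
      using partition_bound_orientation by blast
  next
    assume "partition_bound V h b E A"
    then have "nonempty_partition_bound V h ?b E A"
      using partition_bound_iff_nonempty[OF assms(1)] by blast
    then obtain D where "is_orientation E D" "nonempty_partition_bound V h ?b {#} (D + A)"
      using orientation_exists[OF assms(1,3) submodular_diff_const[OF assms(4)]
          mixed_hypergraph_hyperedges[OF assms(1,2)]] by blast
    then show "\<exists>D. is_orientation E D \<and> partition_bound V h b {#} (D + A)"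
      using partition_bound_iff_nonempty[OF assms(1)] by blast
  qed
  then show ?thesis
    unfolding partition_bound_def .
qed

end
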